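(* Let $\mathcal C=(A,\bar A,B,\bar B,C,\bar C,D,\bar D,E,\bar E,F,\bar F)$ be a coefficient tuple and $\mathcal W=(Q,\bar Q,S,\bar S,R,\bar R,G,\bar G)$ a weight tuple. For any $H,K\in\Phi$, the existence and uniqueness of solutions of the Riccati systems $\mathrm{Ric}(\mathcal C,\mathcal W^{HK})$ are equivalent; in particular, for every $H,K\in\Phi$, $\mathrm{Ric}(\mathcal C,\mathcal W^{HK})$ admits a solution if and only if $\mathrm{Ric}(\mathcal C,\mathcal W)$ admits a solution, and its solution is unique if and only if the solution of $\mathrm{Ric}(\mathcal C,\mathcal W)$ is unique.
   Context: Fix $T>0$, integers $n,m\ge1$, a nonempty $\Theta\subseteq\mathbb R\setminus\{0\}$ and a $\sigma$-finite measure $\nu$ on $\Theta$ with $\int_\Theta(1\wedge\theta^2)\nu(d\theta)<\infty$. $\mathbb S^k$: symmetric $k\times k$ matrices. $L^\infty(0,T;M)$: bounded functions; $L^2_\nu(M)$: deterministic $r:[0,T]\times\Theta\to M$ with $\sup_t\int_\Theta|r(t,\theta)|^2\nu(d\theta)<\infty$. A coefficient tuple $\mathcal C=(A,\bar A,B,\bar B,C,\bar C,D,\bar D,E,\bar E,F,\bar F)$: deterministic $A,\bar A,C,\bar C\in L^\infty(0,T;\mathbb R^{n\times n})$, $B,\bar B,D,\bar D\in L^\infty(0,T;\mathbb R^{n\times m})$, $E,\bar E\in L^2_\nu(\mathbb R^{n\times n})$, $F,\bar F\in L^2_\nu(\mathbb R^{n\times m})$. A weight tuple $\mathcal W=(Q,\bar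 Q,S,\bar S,R,\bar R,G,\bar G)$: $Q,\bar Q\in L^\infty(0,T;\mathbb S^n)$, $R,\bar R\in L^\infty(0,T;\mathbb S^m)$, $S,\bar S\in L^\infty(0,T;\mathbb R^{n\times m})$, $G,\bar G\in\mathbb S^n$. Riccati system $\mathrm{Ric}(\mathcal C,\mathcal W)$: for deterministic $P,\Pi:[0,T]\to\mathbb S^n$, with $\Sigma_{0t}=R_t+D_t^\top P_tD_t+\int_\Theta F_{t,\theta}^\top P_tF_{t,\theta}\nu(d\theta)$, $\Sigma_{1t}=R_t+\bar R_t+(D_t+\bar D_t)^\top P_t(D_t+\bar D_t)+\int_\Theta(F_{t,\theta}+\bar F_{t,\theta})^\top P_t(F_{t,\theta}+\bar F_{t,\theta})\nu(d\theta)$ (invertible): $\dot P_t+P_tA_t+A_t^\top P_t+C_t^\top P_tC_t+\int_\Theta E_{t,\theta}^\top P_tE_{t,\theta}\nu(d\theta)+Q_t-\big(S_t+P_tB_t+C_t^\top P_tD_t+\int_\Theta E_{t,\theta}^\top P_tF_{t,\theta}\nu(d\theta)\big)\Sigma_{0t}^{-1}\big(S_t^\top+B_t^\top P_t+D_t^\top P_tC_t+\int_\Theta F_{t,\theta}^\top P_tE_{t,\theta}\nu(d\theta)\big)=0$, $P_T=G$; $\dot\Pi_t+\Pi_t(A_t+\bar A_t)+(A_t+\bar A_t)^\top\Pi_t+(C_t+\bar C_t)^\top P_t(C_t+\bar C_t)+\int_\Theta(E_{t,\theta}+\bar E_{t,\theta})^\top P_t(E_{t,\theta}+\bar E_{t,\theta})\nu(d\theta)+Q_t+\bar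 Q_t-\big[(S_t+\bar S_t)+\Pi_t(B_t+\bar B_t)+(C_t+\bar C_t)^\top P_t(D_t+\bar D_t)+\int_\Theta(E_{t,\theta}+\bar E_{t,\theta})^\top P_t(F_{t,\theta}+\bar F_{t,\theta})\nu(d\theta)\big]\Sigma_{1t}^{-1}\big[(S_t+\bar S_t)^\top+(B_t+\bar B_t)^\top\Pi_t+(D_t+\bar D_t)^\top P_t(C_t+\bar C_t)+\int_\Theta(F_{t,\theta}+\bar F_{t,\theta})^\top P_t(E_{t,\theta}+\bar E_{t,\theta})\nu(d\theta)\big]=0$, $\Pi_T=G+\bar G$. (For a weight tuple with components marked $HK$, the same system with each weight replaced accordingly.) $\Phi$ is the set of deterministic continuously differentiable bounded functions $[0,T]\to\mathbb S^n$. For $H,K\in\Phi$, $\mathcal W^{HK}=(Q^{HK},\bar Q^{HK},S^{HK},\bar S^{HK},R^{HK},\bar R^{HK},G^{HK},\bar G^{HK})$ is defined by $Q^{HK}_t=Q_t+\dot H_t+H_tA_t+A_t^\top H_t+C_t^\top H_tC_t+\int_\Theta E_{t,\theta}^\top H_tE_{t,\theta}\nu(d\theta)$, $S^{HK}_t=S_t+H_tB_t+C_t^\top H_tD_t+\int_\Theta E_{t,\theta}^\top H_tF_{t,\theta}\nu(d\theta)$, $R^{HK}_t=R_t+D_t^\top H_tD_t+\int_\Theta F_{t,\theta}^\top H_tF_{t,\theta}\nu(d\theta)$, $G^{HK}=G-H_T$, and $\bar Q^{HK},\bar S^{HK},\bar R^{HK},\bar G^{HK}$ determined by $Q^{HK}_t+\bar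 Q^{HK}_t=Q_t+\bar Q_t+\dot K_t+K_t(A_t+\bar A_t)+(A_t+\bar A_t)^\top K_t+(C_t+\bar C_t)^\top H_t(C_t+\bar C_t)+\int_\Theta(E_{t,\theta}+\bar E_{t,\theta})^\top H_t(E_{t,\theta}+\bar E_{t,\theta})\nu(d\theta)$, $S^{HK}_t+\bar S^{HK}_t=S_t+\bar S_t+K_t(B_t+\bar B_t)+(C_t+\bar C_t)^\top H_t(D_t+\bar D_t)+\int_\Theta(E_{t,\theta}+\bar E_{t,\theta})^\top H_t(F_{t,\theta}+\bar F_{t,\theta})\nu(d\theta)$, $R^{HK}_t+\bar R^{HK}_t=R_t+\bar R_t+(D_t+\bar D_t)^\top H_t(D_t+\bar D_t)+\int_\Theta(F_{t,\theta}+\bar F_{t,\theta})^\top H_t(F_{t,\theta}+\bar F_{t,\theta})\nu(d\theta)$, $G^{HK}+\bar G^{HK}=G+\bar G-K_T$. Note $\mathcal W^{00}=\mathcal W$. *)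

theory Defs
  imports "HOL-Analysis.Analysis"
begin

text \<open>An n x m real matrix is  real^'m^'n  (rows indexed by 'n, columns by 'm).
  Time-dependent coefficients are functions of real time (only [0,T] matters);
  jump coefficients additionally take the jump size theta.\<close>

record ('n::finite, 'm::finite) coef =
  cA  :: "real \<Rightarrow> real^'n^'n"
  cAb :: "real \<Rightarrow> real^'n^'n"
  cB  :: "real \<Rightarrow> real^'m^'n"
  cBb :: "real \<Rightarrow> real^'m^'n"
  cC  :: "real \<Rightarrow> real^'n^'n"
  cCb :: "real \<Rightarrow> real^'n^'n"
  cD  :: "real \<Rightarrow> real^'m^'n"
  cDb :: "real \<Rightarrow> real^'m^'n"
  cE  :: "real \<Rightarrow> real \<Rightarrow> real^'n^'n"
  cEb :: "real \<Rightarrow> real \<Rightarrow> real^'n^'n"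
  cF  :: "real \<Rightarrow> real \<Rightarrow> real^'m^'n"
  cFb :: "real \<Rightarrow> real \<Rightarrow> real^'m^'n"

record ('n::finite, 'm::finite) weight =
  wQ  :: "real \<Rightarrow> real^'n^'n"
  wQb :: "real \<Rightarrow> real^'n^'n"
  wS  :: "real \<Rightarrow> real^'m^'n"
  wSb :: "real \<Rightarrow> real^'m^'n"
  wR  :: "real \<Rightarrow> real^'m^'m"
  wRb :: "real \<Rightarrow> real^'m^'m"
  wG  :: "real^'n^'n"
  wGb :: "real^'n^'n"

definition symm :: "real^'k^'k \<Rightarrow> bool" where
  "symm M \<longleftrightarrow> transpose M = M"

definition levy_ok :: "real set \<Rightarrow> real measure \<Rightarrow> bool" where
  "levy_ok \<Theta> \<nu> \<longleftrightarrow> \<Theta> \<noteq> {} \<and> \<Theta> \<subseteq> - {0} \<and>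
     sets \<nu> = sets (restrict_space borel \<Theta>) \<and> sigma_finite_measure \<nu> \<and>
     integrable \<nu> (\<lambda>\<theta>. min 1 (\<theta>\<^sup>2))"

definition Linf :: "real \<Rightarrow> (real \<Rightarrow> 'a::euclidean_space) \<Rightarrow> bool" where
  "Linf T f \<longleftrightarrow> set_borel_measurable lborel {0..T} f \<and> bounded (f ` {0..T})"

definition L2nu :: "real \<Rightarrow> real measure \<Rightarrow> (real \<Rightarrow> real \<Rightarrow> 'a::euclidean_space) \<Rightarrow> bool" where
  "L2nu T \<nu> r \<longleftrightarrow>
     (\<forall>t\<in>{0..T}. r t \<in> borel_measurable \<nu> \<and> integrable \<nu> (\<lambda>\<theta>. (norm (r t \<theta>))\<^sup>2)) \<and>
     bdd_above ((\<lambda>t. \<integral>\<theta>. (norm (r t \<theta>))\<^sup>2 \<partial>\<nu>) ` {0..T})"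

definition coef_ok :: "real \<Rightarrow> real measure \<Rightarrow> ('n::finite,'m::finite) coef \<Rightarrow> bool" where
  "coef_ok T \<nu> c \<longleftrightarrow>
     Linf T (cA c) \<and> Linf T (cAb c) \<and> Linf T (cC c) \<and> Linf T (cCb c) \<and>
     Linf T (cB c) \<and> Linf T (cBb c) \<and> Linf T (cD c) \<and> Linf T (cDb c) \<and>
     L2nu T \<nu> (cE c) \<and> L2nu T \<nu> (cEb c) \<and> L2nu T \<nu> (cF c) \<and> L2nu T \<nu> (cFb c)"

definition weight_ok :: "real \<Rightarrow> ('n::finite,'m::finite) weight \<Rightarrow> bool" where
  "weight_ok T w \<longleftrightarrow>
     Linf T (wQ w) \<and> Linf T (wQb w) \<and> Linf T (wS w) \<and> Linf T (wSb w) \<and>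
     Linf T (wR w) \<and> Linf T (wRb w) \<and>
     (\<forall>t\<in>{0..T}. symm (wQ w t) \<and> symm (wQb w t) \<and> symm (wR w t) \<and> symm (wRb w t)) \<and>
     symm (wG w) \<and> symm (wGb w)"

definition dot :: "real \<Rightarrow> (real \<Rightarrow> real^'n^'n) \<Rightarrow> real \<Rightarrow> real^'n^'n" where
  "dot T H t = vector_derivative H (at t within {0..T})"

definition in_Phi :: "real \<Rightarrow> (real \<Rightarrow> real^'n^'n) \<Rightarrow> bool" where
  "in_Phi T H \<longleftrightarrow> (\<forall>t\<in>{0..T}. H differentiable (at t within {0..T})) \<and>
     continuous_on {0..T} (dot T H) \<and> bounded (H ` {0..T}) \<and>
     (\<forall>t\<in>{0..T}. symm (H t))"

definition Sig0 :: "real measure \<Rightarrow> ('n::finite,'m::finite) coef \<Rightarrow> ('n,'m) weight \<Rightarrow> real \<Rightarrow> real^'n^'n \<Rightarrow> real^'m^'m" where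
  "Sig0 \<nu> c w t P = wR w t + transpose (cD c t) ** P ** cD c t
     + (\<integral>\<theta>. transpose (cF c t \<theta>) ** P ** cF c t \<theta> \<partial>\<nu>)"

definition Sig1 :: "real measure \<Rightarrow> ('n::finite,'m::finite) coef \<Rightarrow> ('n,'m) weight \<Rightarrow> real \<Rightarrow> real^'n^'n \<Rightarrow> real^'m^'m" where
  "Sig1 \<nu> c w t P = wR w t + wRb w t
     + transpose (cD c t + cDb c t) ** P ** (cD c t + cDb c t)
     + (\<integral>\<theta>. transpose (cF c t \<theta> + cFb c t \<theta>) ** P ** (cF c t \<theta> + cFb c t \<theta>) \<partial>\<nu>)"

text \<open>Right-hand sides: the P-equation reads  dP/dt + ricP(t,P) = 0.\<close>
definition ricP :: "real measure \<Rightarrow> ('n::finite,'m::finite) coef \<Rightarrow> ('n,'m) weight \<Rightarrow> real \<Rightarrow> real^'n^'n \<Rightarrow> real^'n^'n" where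
  "ricP \<nu> c w t P =
     P ** cA c t + transpose (cA c t) ** P + transpose (cC c t) ** P ** cC c t
     + (\<integral>\<theta>. transpose (cE c t \<theta>) ** P ** cE c t \<theta> \<partial>\<nu>) + wQ w t
     - (wS w t + P ** cB c t + transpose (cC c t) ** P ** cD c t
          + (\<integral>\<theta>. transpose (cE c t \<theta>) ** P ** cF c t \<theta> \<partial>\<nu>))
       ** matrix_inv (Sig0 \<nu> c w t P)
       ** (transpose (wS w t) + transpose (cB c t) ** P + transpose (cD c t) ** P ** cC c t
          + (\<integral>\<theta>. transpose (cF c t \<theta>) ** P ** cE c t \<theta> \<partial>\<nu>))"

text \<open>The Pm-equation reads  dPi/dt + ricPi(t,P,Pm) = 0.\<close>
definition ricPi :: "real measure \<Rightarrow> ('n::finite,'m::finite) coef \<Rightarrow> ('n,'m) weight \<Rightarrow> real \<Rightarrow> real^'n^'n \<Rightarrow> real^'n^'n \<Rightarrow> real^'n^'n" where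
  "ricPi \<nu> c w t P Pm =
     (let A1 = cA c t + cAb c t; B1 = cB c t + cBb c t; C1 = cC c t + cCb c t;
          D1 = cD c t + cDb c t; E1 = (\<lambda>\<theta>. cE c t \<theta> + cEb c t \<theta>);
          F1 = (\<lambda>\<theta>. cF c t \<theta> + cFb c t \<theta>); S1 = wS w t + wSb w t in
      Pm ** A1 + transpose A1 ** Pm + transpose C1 ** P ** C1
      + (\<integral>\<theta>. transpose (E1 \<theta>) ** P ** E1 \<theta> \<partial>\<nu>) + wQ w t + wQb w t
      - (S1 + Pm ** B1 + transpose C1 ** P ** D1
           + (\<integral>\<theta>. transpose (E1 \<theta>) ** P ** F1 \<theta> \<partial>\<nu>))
        ** matrix_inv (Sig1 \<nu> c w t P)
        ** (transpose S1 + transpose B1 ** Pm + transpose D1 ** P ** C1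
           + (\<integral>\<theta>. transpose (F1 \<theta>) ** P ** E1 \<theta> \<partial>\<nu>)))"

definition ric_sol :: "real measure \<Rightarrow> real \<Rightarrow> ('n::finite,'m::finite) coef \<Rightarrow> ('n,'m) weight
     \<Rightarrow> (real \<Rightarrow> real^'n^'n) \<Rightarrow> (real \<Rightarrow> real^'n^'n) \<Rightarrow> bool" where
  "ric_sol \<nu> T c w P Pm \<longleftrightarrow>
     (\<forall>t\<in>{0..T}. symm (P t) \<and> symm (Pm t) \<and>
        invertible (Sig0 \<nu> c w t (P t)) \<and> invertible (Sig1 \<nu> c w t (P t)) \<and>
        ((\<lambda>s. ricP \<nu> c w s (P s)) has_integral (P t - wG w)) {t..T} \<and>
        ((\<lambda>s. ricPi \<nu> c w s (P s) (Pm s)) has_integral (Pm t - (wG w + wGb w))) {t..T})"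

definition ric_solvable :: "real measure \<Rightarrow> real \<Rightarrow> ('n::finite,'m::finite) coef \<Rightarrow> ('n,'m) weight \<Rightarrow> bool" where
  "ric_solvable \<nu> T c w \<longleftrightarrow> (\<exists>P Pm. ric_sol \<nu> T c w P Pm)"

definition ric_unique :: "real measure \<Rightarrow> real \<Rightarrow> ('n::finite,'m::finite) coef \<Rightarrow> ('n,'m) weight \<Rightarrow> bool" where
  "ric_unique \<nu> T c w \<longleftrightarrow>
     (\<forall>P Pm P' Pm'. ric_sol \<nu> T c w P Pm \<and> ric_sol \<nu> T c w P' Pm' \<longrightarrow>
        (\<forall>t\<in>{0..T}. P t = P' t \<and> Pm t = Pm' t))"

definition weightHK :: "real measure \<Rightarrow> real \<Rightarrow> ('n::finite,'m::finite) coef \<Rightarrow> ('n,'m) weight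
     \<Rightarrow> (real \<Rightarrow> real^'n^'n) \<Rightarrow> (real \<Rightarrow> real^'n^'n) \<Rightarrow> ('n,'m) weight" where
  "weightHK \<nu> T c w H K =
    (let QH = (\<lambda>t. wQ w t + dot T H t + H t ** cA c t + transpose (cA c t) ** H t
                 + transpose (cC c t) ** H t ** cC c t
                 + (\<integral>\<theta>. transpose (cE c t \<theta>) ** H t ** cE c t \<theta> \<partial>\<nu>));
         SH = (\<lambda>t. wS w t + H t ** cB c t + transpose (cC c t) ** H t ** cD c t
                 + (\<integral>\<theta>. transpose (cE c t \<theta>) ** H t ** cF c t \<theta> \<partial>\<nu>));
         RH = (\<lambda>t. wR w t + transpose (cD c t) ** H t ** cD c t
                 + (\<integral>\<theta>. transpose (cF c t \<theta>) ** H t ** cF c t \<theta> \<partial>\<nu>));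
         GH = wG w - H T;
         A1 = (\<lambda>t. cA c t + cAb c t); B1 = (\<lambda>t. cB c t + cBb c t);
         C1 = (\<lambda>t. cC c t + cCb c t); D1 = (\<lambda>t. cD c t + cDb c t);
         E1 = (\<lambda>t \<theta>. cE c t \<theta> + cEb c t \<theta>); F1 = (\<lambda>t \<theta>. cF c t \<theta> + cFb c t \<theta>);
         QHsum = (\<lambda>t. wQ w t + wQb w t + dot T K t + K t ** A1 t + transpose (A1 t) ** K t
                 + transpose (C1 t) ** H t ** C1 t
                 + (\<integral>\<theta>. transpose (E1 t \<theta>) ** H t ** E1 t \<theta> \<partial>\<nu>));
         SHsum = (\<lambda>t. wS w t + wSb w t + K t ** B1 t + transpose (C1 t) ** H t ** D1 t
                 + (\<integral>\<theta>. transpose (E1 t \<theta>) ** H t ** F1 t \<theta> \<partial>\<nu>));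
         RHsum = (\<lambda>t. wR w t + wRb w t + transpose (D1 t) ** H t ** D1 t
                 + (\<integral>\<theta>. transpose (F1 t \<theta>) ** H t ** F1 t \<theta> \<partial>\<nu>));
         GHsum = wG w + wGb w - K T
     in \<lparr> wQ = QH, wQb = (\<lambda>t. QHsum t - QH t),
          wS = SH, wSb = (\<lambda>t. SHsum t - SH t),
          wR = RH, wRb = (\<lambda>t. RHsum t - RH t),
          wG = GH, wGb = GHsum - GH \<rparr>)"

end

theory Submission
  imports Defs
begin

text \<open>Shifting by H and K maps solutions onto solutions: (P, Pi) solves Ric(C, W^HK) exactly
  when (P + H, Pi + K) solves Ric(C, W). The weights of W^HK are built so that Sigma_0, Sigma_1
  and the two factors flanking their inverses are invariant under the shift, while the remaining
  terms of the right-hand sides change by dH/dt and dK/dt. Integrated over [t, T] these contribute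
  H_T - H_t and K_T - K_t, which the shifted terminal values G - H_T and G + Gbar - K_T absorb.\<close>

lemma matrix_add_rdistrib: "((A::'a::semiring_1^'n^'m) + B) ** C = A ** C + B ** C"
  by (vector matrix_matrix_mult_def sum.distrib[symmetric] field_simps)

lemma transpose_add: "transpose ((A::'a::semiring_1^'n^'m) + B) = transpose A + transpose B"
  by (vector transpose_def)

lemma bounded_linear_transpose: "bounded_linear (transpose :: real^'n^'m \<Rightarrow> real^'m^'n)"
  by (auto intro!: linearI simp: linear_conv_bounded_linear[symmetric] transpose_add transpose_scalar)

lemma bounded_bilinear_transpose_mult:
  "bounded_bilinear (\<lambda>(X::real^'k^'n) (Y::real^'l^'n). transpose X ** M ** Y)"
  unfolding bilinear_conv_bounded_bilinear[symmetric] bilinear_def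
  by (auto intro!: linearI simp: transpose_add matrix_add_ldistrib matrix_add_rdistrib
      transpose_scalar matrix_scalar_ac scalar_matrix_assoc)

definition square_integrable :: "'a measure \<Rightarrow> ('a \<Rightarrow> 'b::{real_normed_vector, second_countable_topology}) \<Rightarrow> bool" where
  "square_integrable M f \<longleftrightarrow> f \<in> borel_measurable M \<and> integrable M (\<lambda>x. (norm (f x))\<^sup>2)"

lemma square_integrable_add:
  assumes "square_integrable M f" "square_integrable M g"
  shows "square_integrable M (\<lambda>x. f x + g x)"
proof -
  have [measurable]: "f \<in> borel_measurable M" "g \<in> borel_measurable M"
    using assms by (auto simp: square_integrable_def)
  have bound: "(norm (f x + g x))\<^sup>2 \<le> 2 * (norm (f x))\<^sup>2 + 2 * (norm (g x))\<^sup>2" for x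
  proof -
    have "(norm (f x + g x))\<^sup>2 \<le> (norm (f x) + norm (g x))\<^sup>2"
      using norm_triangle_ineq[of "f x" "g x"] by (simp add: power_mono)
    also have "\<dots> \<le> 2 * (norm (f x))\<^sup>2 + 2 * (norm (g x))\<^sup>2"
      using zero_le_power2[of "norm (f x) - norm (g x)"] unfolding power2_sum power2_diff by linarith
    finally show ?thesis .
  qed
  have "integrable M (\<lambda>x. (norm (f x + g x))\<^sup>2)"
  proof (rule Bochner_Integration.integrable_bound)
    show "integrable M (\<lambda>x. 2 * (norm (f x))\<^sup>2 + 2 * (norm (g x))\<^sup>2)"
      using assms by (simp add: square_integrable_def)
    show "(\<lambda>x. (norm (f x + g x))\<^sup>2) \<in> borel_measurable M"
      by measurable
    show "AE x in M. norm ((norm (f x + g x))\<^sup>2) \<le> norm (2 * (norm (f x))\<^sup>2 + 2 * (norm (g x))\<^sup>2)"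
      using bound by (intro AE_I2) simp
  qed
  then show ?thesis
    by (simp add: square_integrable_def)
qed

lemma integrable_bounded_bilinear_square_integrable:
  fixes f :: "'a \<Rightarrow> 'b::{real_normed_vector, second_countable_topology}"
    and g :: "'a \<Rightarrow> 'c::{real_normed_vector, second_countable_topology}"
    and prod :: "'b \<Rightarrow> 'c \<Rightarrow> 'd::{banach, second_countable_topology}"
  assumes prod: "bounded_bilinear prod"
    and f: "square_integrable M f" and g: "square_integrable M g"
  shows "integrable M (\<lambda>x. prod (f x) (g x))"
proof -
  obtain K where "K \<ge> 0" and K: "\<And>a b. norm (prod a b) \<le> norm a * norm b * K"
    using bounded_bilinear.nonneg_bounded[OF prod] by blast
  show ?thesis
  proof (rule Bochner_Integration.integrable_bound)
    show "integrable M (\<lambda>x. K * (norm (f x))\<^sup>2 + K * (norm (g x))\<^sup>2)"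
      using f g by (simp add: square_integrable_def)
    have "norm (prod (f x) (g x)) \<le> K * (norm (f x))\<^sup>2 + K * (norm (g x))\<^sup>2" for x
    proof -
      have "norm (f x) * norm (g x) \<le> (norm (f x))\<^sup>2 + (norm (g x))\<^sup>2"
        using zero_le_power2[of "norm (f x) - norm (g x)"]
          mult_nonneg_nonneg[OF norm_ge_zero norm_ge_zero, of "f x" "g x"]
        unfolding power2_diff by linarith
      then have "norm (f x) * norm (g x) * K \<le> ((norm (f x))\<^sup>2 + (norm (g x))\<^sup>2) * K"
        using \<open>K \<ge> 0\<close> by (rule mult_right_mono)
      with K[of "f x" "g x"] show ?thesis
        by (simp add: algebra_simps)
    qed
    then show "AE x in M. norm (prod (f x) (g x)) \<le> norm (K * (norm (f x))\<^sup>2 + K * (norm (g x))\<^sup>2)"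
      using \<open>K \<ge> 0\<close> by (intro AE_I2) simp
    have "f \<in> borel_measurable M" "g \<in> borel_measurable M"
      using f g by (simp_all add: square_integrable_def)
    moreover have "continuous_on UNIV (\<lambda>x. prod (fst x) (snd x))"
      by (rule bounded_bilinear.continuous_on[OF prod continuous_on_fst continuous_on_snd])
        (rule continuous_on_id)+
    ultimately show "(\<lambda>x. prod (f x) (g x)) \<in> borel_measurable M"
      by (rule borel_measurable_continuous_Pair)
  qed
qed

lemma integrable_transpose_mult:
  fixes X :: "'a \<Rightarrow> real^'k^'n" and Y :: "'a \<Rightarrow> real^'l^'n"
  assumes "square_integrable M X" "square_integrable M Y"
  shows "integrable M (\<lambda>x. transpose (X x) ** N ** Y x)"
  using integrable_bounded_bilinear_square_integrable[OF bounded_bilinear_transpose_mult assms] .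

lemma integral_transpose_mult_add:
  fixes X :: "'a \<Rightarrow> real^'k^'n" and Y :: "'a \<Rightarrow> real^'l^'n"
  assumes "square_integrable M X" "square_integrable M Y"
  shows "(\<integral>x. transpose (X x) ** (N + N') ** Y x \<partial>M) =
    (\<integral>x. transpose (X x) ** N ** Y x \<partial>M) + (\<integral>x. transpose (X x) ** N' ** Y x \<partial>M)"
  by (simp add: matrix_add_ldistrib matrix_add_rdistrib
      integrable_transpose_mult[OF assms] Bochner_Integration.integral_add)

lemma transpose_integral_transpose_mult:
  fixes X :: "'a \<Rightarrow> real^'k^'n" and Y :: "'a \<Rightarrow> real^'l^'n"
  assumes "square_integrable M X" "square_integrable M Y"
  shows "transpose (\<integral>x. transpose (X x) ** N ** Y x \<partial>M) =
    (\<integral>x. transpose (Y x) ** transpose N ** X x \<partial>M)"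
  by (simp add: integral_bounded_linear[OF bounded_linear_transpose integrable_transpose_mult[OF assms], symmetric]
      matrix_transpose_mul matrix_mul_assoc)

lemma Sig0_weightHK:
  assumes "square_integrable \<nu> (cF c t)"
  shows "Sig0 \<nu> c (weightHK \<nu> T c w H K) t P = Sig0 \<nu> c w t (P + H t)"
  unfolding Sig0_def integral_transpose_mult_add[OF assms assms]
  by (simp add: weightHK_def Let_def matrix_add_ldistrib matrix_add_rdistrib algebra_simps)

lemma Sig1_weightHK:
  assumes "square_integrable \<nu> (cF c t)" "square_integrable \<nu> (cFb c t)"
  shows "Sig1 \<nu> c (weightHK \<nu> T c w H K) t P = Sig1 \<nu> c w t (P + H t)"
proof -
  have F1: "square_integrable \<nu> (\<lambda>\<theta>. cF c t \<theta> + cFb c t \<theta>)"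
    using assms by (rule square_integrable_add)
  show ?thesis
    unfolding Sig1_def integral_transpose_mult_add[OF F1 F1]
    by (simp add: weightHK_def Let_def matrix_add_ldistrib matrix_add_rdistrib algebra_simps)
qed

lemma ricP_weightHK:
  assumes E: "square_integrable \<nu> (cE c t)" and F: "square_integrable \<nu> (cF c t)"
    and H: "symm (H t)"
  shows "ricP \<nu> c (weightHK \<nu> T c w H K) t P = ricP \<nu> c w t (P + H t) + dot T H t"
proof -
  have "transpose (wS (weightHK \<nu> T c w H K) t) =
      transpose (wS w t) + transpose (cB c t) ** H t + transpose (cD c t) ** H t ** cC c t
      + (\<integral>\<theta>. transpose (cF c t \<theta>) ** H t ** cE c t \<theta> \<partial>\<nu>)"
    using H by (simp add: weightHK_def Let_def transpose_add matrix_transpose_mul matrix_mul_assoc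
        transpose_integral_transpose_mult[OF E F] symm_def)
  then show ?thesis
    unfolding ricP_def Sig0_weightHK[OF F] integral_transpose_mult_add[OF E E]
      integral_transpose_mult_add[OF E F] integral_transpose_mult_add[OF F E]
    by (simp add: weightHK_def Let_def matrix_add_ldistrib matrix_add_rdistrib algebra_simps)
qed

lemma ricPi_weightHK:
  assumes "square_integrable \<nu> (cE c t)" "square_integrable \<nu> (cEb c t)"
    and "square_integrable \<nu> (cF c t)" "square_integrable \<nu> (cFb c t)"
    and H: "symm (H t)" and K: "symm (K t)"
  shows "ricPi \<nu> c (weightHK \<nu> T c w H K) t P Pm = ricPi \<nu> c w t (P + H t) (Pm + K t) + dot T K t"
proof -
  have E1: "square_integrable \<nu> (\<lambda>\<theta>. cE c t \<theta> + cEb c t \<theta>)"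
    and F1: "square_integrable \<nu> (\<lambda>\<theta>. cF c t \<theta> + cFb c t \<theta>)"
    using assms by (simp_all add: square_integrable_add)
  have "transpose (wS (weightHK \<nu> T c w H K) t + wSb (weightHK \<nu> T c w H K) t) =
      transpose (wS w t + wSb w t) + transpose (cB c t + cBb c t) ** K t
      + transpose (cD c t + cDb c t) ** H t ** (cC c t + cCb c t)
      + (\<integral>\<theta>. transpose (cF c t \<theta> + cFb c t \<theta>) ** H t ** (cE c t \<theta> + cEb c t \<theta>) \<partial>\<nu>)"
  proof -
    \<comment> \<open>Stated separately because simp would first push transpose_add inside the integral.\<close>
    have "transpose (\<integral>\<theta>. transpose (cE c t \<theta> + cEb c t \<theta>) ** H t ** (cF c t \<theta> + cFb c t \<theta>) \<partial>\<nu>) =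
        (\<integral>\<theta>. transpose (cF c t \<theta> + cFb c t \<theta>) ** H t ** (cE c t \<theta> + cEb c t \<theta>) \<partial>\<nu>)"
      using H by (simp add: transpose_integral_transpose_mult[OF E1 F1] symm_def)
    with H K show ?thesis
      by (simp add: weightHK_def Let_def transpose_add matrix_transpose_mul matrix_mul_assoc symm_def)
  qed
  then show ?thesis
    unfolding ricPi_def Let_def Sig1_weightHK[OF assms(3,4)] integral_transpose_mult_add[OF E1 E1]
      integral_transpose_mult_add[OF E1 F1] integral_transpose_mult_add[OF F1 E1]
    by (simp add: weightHK_def Let_def matrix_add_ldistrib matrix_add_rdistrib algebra_simps)
qed

lemma has_integral_add_iff:
  assumes "(g has_integral J) S" and "\<And>s. s \<in> S \<Longrightarrow> h s = f s + g s"
  shows "(h has_integral (I + J)) S \<longleftrightarrow> (f has_integral I) S"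
proof -
  have "(h has_integral (I + J)) S \<longleftrightarrow> ((\<lambda>s. f s + g s) has_integral (I + J)) S"
    using assms(2) by (intro has_integral_spike_eq[of "{}"]) auto
  also have "\<dots> \<longleftrightarrow> (f has_integral I) S"
    using has_integral_add[OF _ assms(1), of f I] has_integral_diff[OF _ assms(1), of "\<lambda>s. f s + g s" "I + J"]
    by auto
  finally show ?thesis .
qed

lemma in_Phi_has_integral_dot:
  assumes "in_Phi T H" and "t \<in> {0..T}"
  shows "(dot T H has_integral (H T - H t)) {t..T}"
proof (rule fundamental_theorem_of_calculus)
  show "t \<le> T"
    using assms(2) by simp
  fix s assume s: "s \<in> {t..T}"
  with assms have "H differentiable (at s within {0..T})"
    by (auto simp: in_Phi_def)
  then have "(H has_vector_derivative dot T H s) (at s within {0..T})"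
    by (simp add: dot_def vector_derivative_works[symmetric])
  then show "(H has_vector_derivative dot T H s) (at s within {t..T})"
    by (rule has_vector_derivative_within_subset) (use assms(2) in auto)
qed

lemma in_Phi_symm: "in_Phi T H \<Longrightarrow> t \<in> {0..T} \<Longrightarrow> symm (H t)"
  by (simp add: in_Phi_def)

lemma symm_add_iff: "symm B \<Longrightarrow> symm (A + B) \<longleftrightarrow> symm (A::real^'n^'n)"
  by (auto simp: symm_def transpose_add)

lemma L2nu_square_integrable: "L2nu T \<nu> r \<Longrightarrow> t \<in> {0..T} \<Longrightarrow> square_integrable \<nu> (r t)"
  by (simp add: L2nu_def square_integrable_def)

lemma ric_sol_weightHK_iff:
  assumes c: "coef_ok T \<nu> c" and H: "in_Phi T H" and K: "in_Phi T K"
  shows "ric_sol \<nu> T c (weightHK \<nu> T c w H K) P Pm \<longleftrightarrow>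
    ric_sol \<nu> T c w (\<lambda>t. P t + H t) (\<lambda>t. Pm t + K t)"
proof -
  let ?w' = "weightHK \<nu> T c w H K"
  have shift:
    "Sig0 \<nu> c ?w' t (P t) = Sig0 \<nu> c w t (P t + H t)"
    "Sig1 \<nu> c ?w' t (P t) = Sig1 \<nu> c w t (P t + H t)"
    "ricP \<nu> c ?w' t (P t) = ricP \<nu> c w t (P t + H t) + dot T H t"
    "ricPi \<nu> c ?w' t (P t) (Pm t) = ricPi \<nu> c w t (P t + H t) (Pm t + K t) + dot T K t"
    "symm (P t + H t) \<longleftrightarrow> symm (P t)" "symm (Pm t + K t) \<longleftrightarrow> symm (Pm t)"
    if t: "t \<in> {0..T}" for t
  proof -
    have "square_integrable \<nu> (cE c t)" "square_integrable \<nu> (cEb c t)"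
      "square_integrable \<nu> (cF c t)" "square_integrable \<nu> (cFb c t)"
      using c t by (auto simp: coef_ok_def intro: L2nu_square_integrable)
    moreover have "symm (H t)" "symm (K t)"
      using H K t by (simp_all add: in_Phi_symm)
    ultimately show
      "Sig0 \<nu> c ?w' t (P t) = Sig0 \<nu> c w t (P t + H t)"
      "Sig1 \<nu> c ?w' t (P t) = Sig1 \<nu> c w t (P t + H t)"
      "ricP \<nu> c ?w' t (P t) = ricP \<nu> c w t (P t + H t) + dot T H t"
      "ricPi \<nu> c ?w' t (P t) (Pm t) = ricPi \<nu> c w t (P t + H t) (Pm t + K t) + dot T K t"
      "symm (P t + H t) \<longleftrightarrow> symm (P t)" "symm (Pm t + K t) \<longleftrightarrow> symm (Pm t)"
      by (simp_all add: Sig0_weightHK Sig1_weightHK ricP_weightHK ricPi_weightHK symm_add_iff)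
  qed
  have "((\<lambda>s. ricP \<nu> c ?w' s (P s)) has_integral (P t - wG ?w')) {t..T} \<longleftrightarrow>
      ((\<lambda>s. ricP \<nu> c w s (P s + H s)) has_integral (P t + H t - wG w)) {t..T}"
    if t: "t \<in> {0..T}" for t
  proof -
    have terminal: "P t - wG ?w' = (P t + H t - wG w) + (H T - H t)"
      by (simp add: weightHK_def Let_def)
    show ?thesis
      unfolding terminal
      by (rule has_integral_add_iff[OF in_Phi_has_integral_dot[OF H t]]) (use t shift in auto)
  qed
  moreover have "((\<lambda>s. ricPi \<nu> c ?w' s (P s) (Pm s)) has_integral (Pm t - (wG ?w' + wGb ?w'))) {t..T} \<longleftrightarrow>
      ((\<lambda>s. ricPi \<nu> c w s (P s + H s) (Pm s + K s)) has_integral (Pm t + K t - (wG w + wGb w))) {t..T}"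
    if t: "t \<in> {0..T}" for t
  proof -
    have terminal: "Pm t - (wG ?w' + wGb ?w') = (Pm t + K t - (wG w + wGb w)) + (K T - K t)"
      by (simp add: weightHK_def Let_def)
    show ?thesis
      unfolding terminal
      by (rule has_integral_add_iff[OF in_Phi_has_integral_dot[OF K t]]) (use t shift in auto)
  qed
  ultimately show ?thesis
    using shift by (auto simp: ric_sol_def)
qed

lemma ric_solvable_weightHK_iff:
  assumes "coef_ok T \<nu> c" and "in_Phi T H" and "in_Phi T K"
  shows "ric_solvable \<nu> T c (weightHK \<nu> T c w H K) \<longleftrightarrow> ric_solvable \<nu> T c w"
proof
  show "ric_solvable \<nu> T c (weightHK \<nu> T c w H K)" if "ric_solvable \<nu> T c w"
  proof -
    from that obtain P Pm where "ric_sol \<nu> T c w P Pm"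
      by (auto simp: ric_solvable_def)
    then have "ric_sol \<nu> T c (weightHK \<nu> T c w H K) (\<lambda>t. P t - H t) (\<lambda>t. Pm t - K t)"
      by (simp add: ric_sol_weightHK_iff[OF assms])
    then show ?thesis
      by (auto simp: ric_solvable_def)
  qed
qed (auto simp: ric_solvable_def ric_sol_weightHK_iff[OF assms])

lemma ric_unique_weightHK_iff:
  assumes "coef_ok T \<nu> c" and "in_Phi T H" and "in_Phi T K"
  shows "ric_unique \<nu> T c (weightHK \<nu> T c w H K) \<longleftrightarrow> ric_unique \<nu> T c w"
proof
  assume unique: "ric_unique \<nu> T c (weightHK \<nu> T c w H K)"
  show "ric_unique \<nu> T c w"
    unfolding ric_unique_def
  proof (intro allI impI ballI)
    fix P Pm P' Pm' t
    assume "ric_sol \<nu> T c w P Pm \<and> ric_sol \<nu> T c w P' Pm'" and "t \<in> {0..T}"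
    then have "ric_sol \<nu> T c (weightHK \<nu> T c w H K) (\<lambda>t. P t - H t) (\<lambda>t. Pm t - K t)"
      and "ric_sol \<nu> T c (weightHK \<nu> T c w H K) (\<lambda>t. P' t - H t) (\<lambda>t. Pm' t - K t)"
      by (simp_all add: ric_sol_weightHK_iff[OF assms])
    with unique \<open>t \<in> {0..T}\<close> show "P t = P' t \<and> Pm t = Pm' t"
      unfolding ric_unique_def by fastforce
  qed
next
  assume unique: "ric_unique \<nu> T c w"
  show "ric_unique \<nu> T c (weightHK \<nu> T c w H K)"
    unfolding ric_unique_def
  proof (intro allI impI ballI)
    fix P Pm P' Pm' t
    assume "ric_sol \<nu> T c (weightHK \<nu> T c w H K) P Pm \<and> ric_sol \<nu> T c (weightHK \<nu> T c w H K) P' Pm'"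
      and "t \<in> {0..T}"
    then have "ric_sol \<nu> T c w (\<lambda>t. P t + H t) (\<lambda>t. Pm t + K t)"
      and "ric_sol \<nu> T c w (\<lambda>t. P' t + H t) (\<lambda>t. Pm' t + K t)"
      by (simp_all add: ric_sol_weightHK_iff[OF assms])
    with unique \<open>t \<in> {0..T}\<close> show "P t = P' t \<and> Pm t = Pm' t"
      unfolding ric_unique_def by fastforce
  qed
qed

theorem lemma4p2:
  fixes T :: real and \<Theta> :: "real set" and \<nu> :: "real measure"
    and c :: "('n::finite, 'm::finite) coef" and w :: "('n, 'm) weight"
    and H K :: "real \<Rightarrow> real^'n^'n"
  assumes "T > 0" and "levy_ok \<Theta> \<nu>"
    and "coef_ok T \<nu> c" and "weight_ok T w"
    and "in_Phi T H" and "in_Phi T K"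
  shows "(ric_solvable \<nu> T c (weightHK \<nu> T c w H K) \<longleftrightarrow> ric_solvable \<nu> T c w) \<and>
         (ric_unique \<nu> T c (weightHK \<nu> T c w H K) \<longleftrightarrow> ric_unique \<nu> T c w)"
  using ric_solvable_weightHK_iff[OF assms(3,5,6)] ric_unique_weightHK_iff[OF assms(3,5,6)] by blast

end
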